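(* Let $n \ge 2$ be an integer, let $1 \le \underline{x}_i < \bar{x}_i$ for $i \in \{1,2\}$, and let $\varepsilon \ge 2^{-2^{n-1}}$. For $x=(x_1,x_2) \in X := [\underline{x}_1,\bar{x}_1] \times [\underline{x}_2,\bar{x}_2]$, let $S_\varepsilon(x)$ denote the set of $\varepsilon$-feasible follower's solutions of the lower-level problem $$\max_{y \in \mathbb{R}^{n+2}} \; y_1 - y_n\,(x_1 + x_2 - y_{n+1} - y_{n+2})$$ subject to $y_1 + y_n = \tfrac12$, $y_i^2 \le y_{i+1}$ for $i \in \{1,\dots,n-1\}$, $y_i \ge 0$ for $i \in \{1,\dots,n\}$, $y_{n+1} \in [0,x_1]$, $y_{n+2} \in [-x_2,x_2]$, and let $F(x,y) = x_1 - 2y_{n+1} + y_{n+2}$. Then the optimistic problem $\max_{x \in X} \max_{y \in S_\varepsilon(x)} F(x,y)$ has the optimal solution $x^*_{\mathrm{o}} = (\bar{x}_1,\bar{x}_2)$ with optimal objective value $F^*_{\mathrm{o}} = \bar{x}_1 + \bar{x}_2$, and the pessimistic problem $\max_{x \in X} \min_{y \in S_\varepsilon(x)} F(x,y)$ has the optimal solution $x^*_{\mathrm{p}} = (\underline{x}_1,\underline{x}_2)$ with optimal objective value $F^*_{\mathrm{p}} = -\underline{x}_1 - \underline{x}_2$.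
   Context: For $\varepsilon>0$, a point is $\varepsilon$-feasible for the lower-level problem if it satisfies all linear constraints ($y_1+y_n=\tfrac12$, $y_i\ge0$ for $i\le n$, the bounds on $y_{n+1},y_{n+2}$) exactly and satisfies $y_i^2 - y_{i+1} \le \varepsilon$ for all $i \in \{1,\dots,n-1\}$ (the only nonlinear constraints). An $\varepsilon$-feasible follower's solution for given $x$ is an $\varepsilon$-feasible point maximizing the lower-level objective over all $\varepsilon$-feasible points. *)

theory Defs
  imports "HOL-Analysis.Analysis" "HOL-Library.Extended_Real"
begin

text \<open>Vectors y in R^(n+2) are represented as functions nat => real with
  components y 1, ..., y (n+2) and all other entries equal to 0.
  Leader variables x = (x1, x2) are pairs of reals.\<close>

definition eps_feasible :: "nat \<Rightarrow> real \<Rightarrow> real \<times> real \<Rightarrow> (nat \<Rightarrow> real) \<Rightarrow> bool" where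
  "eps_feasible n \<epsilon> x y \<longleftrightarrow>
     (\<forall>i. i \<notin> {1..n+2} \<longrightarrow> y i = 0) \<and>
     y 1 + y n = 1/2 \<and>
     (\<forall>i\<in>{1..n}. 0 \<le> y i) \<and>
     0 \<le> y (n+1) \<and> y (n+1) \<le> fst x \<and>
     - snd x \<le> y (n+2) \<and> y (n+2) \<le> snd x \<and>
     (\<forall>i\<in>{1..n-1}. (y i)\<^sup>2 - y (i+1) \<le> \<epsilon>)"

definition ll_obj :: "nat \<Rightarrow> real \<times> real \<Rightarrow> (nat \<Rightarrow> real) \<Rightarrow> real" where
  "ll_obj n x y = y 1 - y n * (fst x + snd x - y (n+1) - y (n+2))"

definition follower_sol :: "nat \<Rightarrow> real \<Rightarrow> real \<times> real \<Rightarrow> (nat \<Rightarrow> real) set" where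
  "follower_sol n \<epsilon> x =
     {y. eps_feasible n \<epsilon> x y \<and> (\<forall>z. eps_feasible n \<epsilon> x z \<longrightarrow> ll_obj n x z \<le> ll_obj n x y)}"

definition ul_obj :: "nat \<Rightarrow> real \<times> real \<Rightarrow> (nat \<Rightarrow> real) \<Rightarrow> real" where
  "ul_obj n x y = fst x - 2 * y (n+1) + y (n+2)"

end

theory Submission
  imports Defs
begin

text \<open>Since y_n \<ge> 0 and y_(n+1) \<le> x_1, y_(n+2) \<le> x_2, the follower's objective is at most
  y_1 \<le> 1/2. With y_n = 0 the coupling term vanishes, and the repeated squares
  y_i = 2^(-2^(i-1)) for i < n satisfy every constraint y_i^2 \<le> y_(i+1) exactly except the
  last one, which is violated by 2^(-2^(n-1)) \<le> \<epsilon>. So for every x the set S_\<epsilon>(x)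
  contains these points with y_(n+1) \<in> [0, x_1] and y_(n+2) \<in> [-x_2, x_2] arbitrary, and the
  leader's objective x_1 - 2 y_(n+1) + y_(n+2) ranges over all of [-x_1 - x_2, x_1 + x_2]
  on S_\<epsilon>(x).\<close>

definition squaring_chain :: "nat \<Rightarrow> real \<Rightarrow> real \<Rightarrow> nat \<Rightarrow> real" where
  "squaring_chain n a b i =
     (if i = n + 1 then a else if i = n + 2 then b
      else if 1 \<le> i \<and> i < n then (1/2) ^ (2 ^ (i - 1)) else 0)"

lemma squaring_chain_eps_feasible:
  assumes "n \<ge> 2" and eps: "\<epsilon> \<ge> 1 / 2 ^ (2 ^ (n - 1))"
    and "0 \<le> a" "a \<le> fst x" "- snd x \<le> b" "b \<le> snd x"
  shows "eps_feasible n \<epsilon> x (squaring_chain n a b)"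
proof -
  let ?y = "squaring_chain n a b"
  have "?y i ^ 2 - ?y (i + 1) \<le> \<epsilon>" if i: "1 \<le> i" "i \<le> n - 1" for i
  proof -
    have "i < n" using i assms(1) by linarith
    then have "?y i ^ 2 = (1/2) ^ (2 ^ (i - 1) * 2)"
      using i by (simp add: squaring_chain_def power_mult)
    also have "2 ^ (i - 1) * 2 = (2::nat) ^ i"
      using i(1) by (cases i) auto
    finally have square: "?y i ^ 2 = 1 / 2 ^ (2 ^ i)"
      by (simp add: power_one_over)
    show ?thesis
    proof (cases "i + 1 < n")
      case True
      then have "?y (i + 1) = ?y i ^ 2"
        using square by (simp add: squaring_chain_def power_one_over)
      moreover have "\<epsilon> > 0"
        using eps by (smt (verit) divide_pos_pos zero_less_power)
      ultimately show ?thesis by simp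
    next
      case False
      then have "i = n - 1" "?y (i + 1) = 0"
        using i by (auto simp: squaring_chain_def)
      then show ?thesis using square eps by simp
    qed
  qed
  then show ?thesis
    using assms unfolding eps_feasible_def by (auto simp: squaring_chain_def)
qed

lemma ll_obj_squaring_chain:
  assumes "n \<ge> 2"
  shows "ll_obj n x (squaring_chain n a b) = 1/2"
  using assms by (simp add: ll_obj_def squaring_chain_def)

lemma ll_obj_le_half:
  assumes "n \<ge> 1" and "eps_feasible n \<epsilon> x y"
  shows "ll_obj n x y \<le> 1/2"
proof -
  have "y 1 + y n = 1/2" "y n \<ge> 0" "y (n + 1) \<le> fst x" "y (n + 2) \<le> snd x"
    using assms unfolding eps_feasible_def by auto
  moreover from calculation have "y n * (fst x + snd x - y (n + 1) - y (n + 2)) \<ge> 0"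
    by simp
  ultimately show ?thesis
    unfolding ll_obj_def by linarith
qed

lemma squaring_chain_in_follower_sol:
  assumes "n \<ge> 2" and "\<epsilon> \<ge> 1 / 2 ^ (2 ^ (n - 1))"
    and "0 \<le> a" "a \<le> fst x" "- snd x \<le> b" "b \<le> snd x"
  shows "squaring_chain n a b \<in> follower_sol n \<epsilon> x"
proof -
  have "ll_obj n x z \<le> ll_obj n x (squaring_chain n a b)" if "eps_feasible n \<epsilon> x z" for z
  proof -
    have "ll_obj n x z \<le> 1/2" using ll_obj_le_half that assms(1) by simp
    then show ?thesis by (simp only: ll_obj_squaring_chain[OF assms(1)])
  qed
  then show ?thesis
    using squaring_chain_eps_feasible[OF assms] unfolding follower_sol_def by blast
qed

lemma ul_obj_squaring_chain:
  "ul_obj n x (squaring_chain n a b) = fst x - 2 * a + b"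
  by (simp add: ul_obj_def squaring_chain_def)

lemma ul_obj_bounds:
  assumes "eps_feasible n \<epsilon> x y"
  shows "- fst x - snd x \<le> ul_obj n x y" "ul_obj n x y \<le> fst x + snd x"
  using assms unfolding eps_feasible_def ul_obj_def by auto

theorem mainTheorem6:
  fixes n :: nat and xl1 xu1 xl2 xu2 \<epsilon> :: real
  assumes "n \<ge> 2"
    and "1 \<le> xl1" "xl1 < xu1" "1 \<le> xl2" "xl2 < xu2"
    and "\<epsilon> \<ge> 1 / 2 ^ (2 ^ (n - 1))"
  defines "X \<equiv> {xl1..xu1} \<times> {xl2..xu2}"
    and "S \<equiv> follower_sol n \<epsilon>"
    and "F \<equiv> ul_obj n"
  shows
    \<comment> \<open>optimistic problem: optimal solution (xu1, xu2), value xu1 + xu2\<close>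
    "((xu1, xu2) \<in> X \<and>
     (\<exists>y\<in>S (xu1, xu2). F (xu1, xu2) y = xu1 + xu2) \<and>
     (\<forall>x\<in>X. \<forall>y\<in>S x. F x y \<le> xu1 + xu2)) \<and>
    \<comment> \<open>pessimistic problem: optimal solution (xl1, xl2), value -xl1 - xl2\<close>
    ((xl1, xl2) \<in> X \<and>
     (\<exists>y\<in>S (xl1, xl2). F (xl1, xl2) y = - xl1 - xl2 \<and>
        (\<forall>z\<in>S (xl1, xl2). F (xl1, xl2) y \<le> F (xl1, xl2) z)) \<and>
     (\<forall>x\<in>X. (INF y\<in>S x. ereal (F x y)) \<le> ereal (- xl1 - xl2)))"
proof -
  note chain_sol = squaring_chain_in_follower_sol[OF assms(1,6)]
  have S_feasible: "eps_feasible n \<epsilon> x y" if "y \<in> S x" for x y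
    using that unfolding S_def follower_sol_def by simp
  have X_bounds: "xl1 \<le> fst x" "fst x \<le> xu1" "xl2 \<le> snd x" "snd x \<le> xu2" if "x \<in> X" for x
    using that unfolding X_def by auto
  define y_low where "y_low x = squaring_chain n (fst x) (- snd x)" for x
  have y_low: "y_low x \<in> S x" "F x (y_low x) = - fst x - snd x" if "x \<in> X" for x
    using chain_sol X_bounds[OF that] assms(2,4)
    by (auto simp: y_low_def S_def F_def ul_obj_squaring_chain)
  have "squaring_chain n 0 xu2 \<in> S (xu1, xu2)"
    using chain_sol assms(2-5) by (simp add: S_def)
  moreover have "F (xu1, xu2) (squaring_chain n 0 xu2) = xu1 + xu2"
    by (simp add: F_def ul_obj_squaring_chain)
  moreover have "F x y \<le> xu1 + xu2" if "x \<in> X" "y \<in> S x" for x y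
    using ul_obj_bounds(2)[OF S_feasible[OF that(2)]] X_bounds[OF that(1)]
    unfolding F_def by linarith
  moreover have "F (xl1, xl2) (y_low (xl1, xl2)) \<le> F (xl1, xl2) z" if "z \<in> S (xl1, xl2)" for z
    using ul_obj_bounds(1)[OF S_feasible[OF that]] y_low[of "(xl1, xl2)"] assms(2-5)
    by (simp add: X_def F_def)
  moreover have "(INF y\<in>S x. ereal (F x y)) \<le> ereal (- xl1 - xl2)" if "x \<in> X" for x
    using INF_lower[OF y_low(1)[OF that], of "\<lambda>y. ereal (F x y)"] y_low(2)[OF that]
      X_bounds[OF that] by (simp add: order_trans)
  ultimately show ?thesis
    using y_low[of "(xl1, xl2)"] assms(2-5) unfolding X_def by auto
qed

end
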